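(* Let $s\in[0,1]$ and let $(L_n)_{n\ge1}$, $(U_n)_{n\ge1}$ be random variables on a common probability space such that, almost surely, for every $n\ge1$: $L_n\le U_n$; $L_n\in[0,1]$ and $U_n\in[0,1]$; and (for $n\ge2$) $L_{n-1}\le L_n$ and $U_{n-1}\ge U_n$. Suppose moreover that $l_n:=\mathbb{E}L_n$ is nondecreasing with $l_n\to s$ and $u_n:=\mathbb{E}U_n$ is nonincreasing with $u_n\to s$. Let $G_0\sim U(0,1)$ be independent of $(L_n,U_n)_{n\ge1}$. Define $$N:=\inf\{n\ge1:\ G_0\le L_n\ \text{or}\ G_0>U_n\},$$ and $C_s:=1$ if $G_0\le L_N$ and $C_s:=0$ otherwise (i.e. if $G_0>U_N$). Then $N<\infty$ almost surely, $\mathbb{P}(C_s=1)=s$, and $\mathbb{P}(N>n)=u_n-l_n$ for every $n\ge1$.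
   Context: This formalizes "Algorithm 3": draw $G_0\sim U(0,1)$ once, then for $n=1,2,\dots$ obtain $L_n,U_n$; output $1$ if $G_0\le L_n$, output $0$ if $G_0>U_n$, otherwise continue with $n+1$. The variables $L_n,U_n$ are not assumed to satisfy $L_n\le s\le U_n$. *)

theory Defs
  imports "HOL-Probability.Probability"
begin

definition alg3_N :: "('a \<Rightarrow> real) \<Rightarrow> (nat \<Rightarrow> 'a \<Rightarrow> real) \<Rightarrow> (nat \<Rightarrow> 'a \<Rightarrow> real) \<Rightarrow> 'a \<Rightarrow> enat" where
  "alg3_N G0 L U \<omega> = (INF n\<in>{n. 1 \<le> n \<and> (G0 \<omega> \<le> L n \<omega> \<or> G0 \<omega> > U n \<omega>)}. enat n)"

definition alg3_C :: "('a \<Rightarrow> real) \<Rightarrow> (nat \<Rightarrow> 'a \<Rightarrow> real) \<Rightarrow> (nat \<Rightarrow> 'a \<Rightarrow> real) \<Rightarrow> 'a \<Rightarrow> nat" where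
  "alg3_C G0 L U \<omega> = (case alg3_N G0 L U \<omega> of
      enat n \<Rightarrow> (if G0 \<omega> \<le> L n \<omega> then 1 else 0)
    | \<infinity> \<Rightarrow> 0)"

end

theory Submission
  imports Defs
begin

(*
  Outside a null set the brackets are nested: L_1 <= L_2 <= ... <= U_2 <= U_1.  Then the
  algorithm has not halted by step n exactly when L_n < G0 <= U_n, and if G0 <= L_n it
  outputs 1, while an output 1 forces G0 <= U_n.  Since G0 is uniform and independent of
  the brackets, P(G0 <= X) = E X for X = L_n, U_n.  Hence
    P(N > n) = P(G0 <= U_n) - P(G0 <= L_n) = u_n - l_n,
  {N = infinity} is the decreasing intersection of the events {N > n}, whose probabilities
  tend to s - s = 0, and l_n <= P(C = 1) <= u_n squeezes P(C = 1) to s.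
*)

section \<open>The algorithm along a single sample path\<close>

definition alg3_halts :: "('a \<Rightarrow> real) \<Rightarrow> (nat \<Rightarrow> 'a \<Rightarrow> real) \<Rightarrow> (nat \<Rightarrow> 'a \<Rightarrow> real) \<Rightarrow> nat \<Rightarrow> 'a \<Rightarrow> bool" where
  "alg3_halts G0 L U n \<omega> \<longleftrightarrow> G0 \<omega> \<le> L n \<omega> \<or> U n \<omega> < G0 \<omega>"

lemma alg3_N_halts: "alg3_N G0 L U \<omega> = (INF n\<in>{n. 1 \<le> n \<and> alg3_halts G0 L U n \<omega>}. enat n)"
  unfolding alg3_N_def alg3_halts_def ..

lemma alg3_N_gt_iff:
  "enat n < alg3_N G0 L U \<omega> \<longleftrightarrow> (\<forall>k. 1 \<le> k \<and> k \<le> n \<longrightarrow> \<not> alg3_halts G0 L U k \<omega>)"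
proof
  assume gt: "enat n < alg3_N G0 L U \<omega>"
  show "\<forall>k. 1 \<le> k \<and> k \<le> n \<longrightarrow> \<not> alg3_halts G0 L U k \<omega>"
  proof (intro allI impI notI)
    fix k assume k: "1 \<le> k \<and> k \<le> n" and "alg3_halts G0 L U k \<omega>"
    then have "alg3_N G0 L U \<omega> \<le> enat k"
      unfolding alg3_N_halts by (intro INF_lower) simp
    with gt have "enat n < enat k" by (rule less_le_trans)
    with k show False by simp
  qed
next
  assume none: "\<forall>k. 1 \<le> k \<and> k \<le> n \<longrightarrow> \<not> alg3_halts G0 L U k \<omega>"
  have "enat (Suc n) \<le> alg3_N G0 L U \<omega>"
    unfolding alg3_N_halts by (rule INF_greatest) (use none not_less_eq_eq in auto)
  then show "enat n < alg3_N G0 L U \<omega>" by (simp add: Suc_ile_eq)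
qed

lemma alg3_N_first_halt:
  assumes "1 \<le> n" "alg3_halts G0 L U n \<omega>"
    and before: "\<forall>k. 1 \<le> k \<and> k < n \<longrightarrow> \<not> alg3_halts G0 L U k \<omega>"
  shows "alg3_N G0 L U \<omega> = enat n"
  unfolding alg3_N_halts
proof (rule antisym)
  show "(INF k\<in>{k. 1 \<le> k \<and> alg3_halts G0 L U k \<omega>}. enat k) \<le> enat n"
    using assms(1,2) by (intro INF_lower) simp
  show "enat n \<le> (INF k\<in>{k. 1 \<le> k \<and> alg3_halts G0 L U k \<omega>}. enat k)"
    using before by (intro INF_greatest) (auto simp: not_less[symmetric])
qed

lemma alg3_C_eq_1_iff:
  "alg3_C G0 L U \<omega> = 1 \<longleftrightarrow>
    (\<exists>n\<ge>1. G0 \<omega> \<le> L n \<omega> \<and> (\<forall>k. 1 \<le> k \<and> k < n \<longrightarrow> \<not> alg3_halts G0 L U k \<omega>))"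
proof
  assume "alg3_C G0 L U \<omega> = 1"
  then obtain n where N: "alg3_N G0 L U \<omega> = enat n" and le: "G0 \<omega> \<le> L n \<omega>"
    unfolding alg3_C_def by (cases "alg3_N G0 L U \<omega>") (auto split: if_splits)
  have "enat 0 < alg3_N G0 L U \<omega>" by (simp add: alg3_N_gt_iff)
  then have "1 \<le> n" using N by simp
  moreover have "enat (n - 1) < alg3_N G0 L U \<omega>" using N \<open>1 \<le> n\<close> by simp
  then have "\<forall>k. 1 \<le> k \<and> k < n \<longrightarrow> \<not> alg3_halts G0 L U k \<omega>"
    unfolding alg3_N_gt_iff by auto
  ultimately show "\<exists>n\<ge>1. G0 \<omega> \<le> L n \<omega> \<and> (\<forall>k. 1 \<le> k \<and> k < n \<longrightarrow> \<not> alg3_halts G0 L U k \<omega>)"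
    using le by blast
next
  assume "\<exists>n\<ge>1. G0 \<omega> \<le> L n \<omega> \<and> (\<forall>k. 1 \<le> k \<and> k < n \<longrightarrow> \<not> alg3_halts G0 L U k \<omega>)"
  then obtain n where n: "1 \<le> n" "G0 \<omega> \<le> L n \<omega>"
    and before: "\<forall>k. 1 \<le> k \<and> k < n \<longrightarrow> \<not> alg3_halts G0 L U k \<omega>" by blast
  have "alg3_N G0 L U \<omega> = enat n"
    using n before by (intro alg3_N_first_halt) (auto simp: alg3_halts_def)
  then show "alg3_C G0 L U \<omega> = 1" using n by (simp add: alg3_C_def)
qed

section \<open>Nested brackets\<close>

definition nested_brackets :: "(nat \<Rightarrow> 'a \<Rightarrow> real) \<Rightarrow> (nat \<Rightarrow> 'a \<Rightarrow> real) \<Rightarrow> 'a \<Rightarrow> bool" where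
  "nested_brackets L U \<omega> \<longleftrightarrow> (\<forall>n\<ge>1. L n \<omega> \<le> U n \<omega> \<and> L n \<omega> \<in> {0..1} \<and> U n \<omega> \<in> {0..1}
     \<and> (n \<ge> 2 \<longrightarrow> L (n - 1) \<omega> \<le> L n \<omega> \<and> U n \<omega> \<le> U (n - 1) \<omega>))"

lemma nested_bracketsD:
  assumes "nested_brackets L U \<omega>" "1 \<le> n"
  shows "L n \<omega> \<le> U n \<omega>" "L n \<omega> \<in> {0..1}" "U n \<omega> \<in> {0..1}"
  using assms unfolding nested_brackets_def by auto

lemma nested_brackets_mono:
  assumes nested: "nested_brackets L U \<omega>" and "1 \<le> k" "k \<le> n"
  shows "L k \<omega> \<le> L n \<omega> \<and> U n \<omega> \<le> U k \<omega>"
  using \<open>k \<le> n\<close>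
proof (induction n rule: dec_induct)
  case (step m)
  have "L m \<omega> \<le> L (Suc m) \<omega> \<and> U (Suc m) \<omega> \<le> U m \<omega>"
    using nested \<open>1 \<le> k\<close> \<open>k \<le> m\<close> unfolding nested_brackets_def
    by (auto dest!: spec[of _ "Suc m"])
  with step.IH show ?case by simp
qed simp

lemma alg3_N_gt_iff_nested:
  assumes nested: "nested_brackets L U \<omega>" and "1 \<le> n"
  shows "enat n < alg3_N G0 L U \<omega> \<longleftrightarrow> L n \<omega> < G0 \<omega> \<and> G0 \<omega> \<le> U n \<omega>"
  unfolding alg3_N_gt_iff
proof
  assume "\<forall>k. 1 \<le> k \<and> k \<le> n \<longrightarrow> \<not> alg3_halts G0 L U k \<omega>"
  then show "L n \<omega> < G0 \<omega> \<and> G0 \<omega> \<le> U n \<omega>"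
    using \<open>1 \<le> n\<close> by (auto simp: alg3_halts_def)
next
  assume "L n \<omega> < G0 \<omega> \<and> G0 \<omega> \<le> U n \<omega>"
  then show "\<forall>k. 1 \<le> k \<and> k \<le> n \<longrightarrow> \<not> alg3_halts G0 L U k \<omega>"
    using nested_brackets_mono[OF nested] by (fastforce simp: alg3_halts_def)
qed

text \<open>For nested brackets, G0 \<le> L_n forces output 1: the first halting step m \<le> n cannot be
  an exit through the top, as U_m \<ge> U_n \<ge> L_n \<ge> G0.\<close>
lemma alg3_C_eq_1_if_below:
  assumes nested: "nested_brackets L U \<omega>" and "1 \<le> n" and below: "G0 \<omega> \<le> L n \<omega>"
  shows "alg3_C G0 L U \<omega> = 1"
proof -
  have "1 \<le> n \<and> alg3_halts G0 L U n \<omega>" using assms by (simp add: alg3_halts_def)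
  then obtain m where "m \<le> n" and first: "\<forall>k<m. \<not> (1 \<le> k \<and> alg3_halts G0 L U k \<omega>)"
    and m: "1 \<le> m" "alg3_halts G0 L U m \<omega>"
    using ex_least_nat_le[where P = "\<lambda>k. 1 \<le> k \<and> alg3_halts G0 L U k \<omega>"] by blast
  have "U n \<omega> \<le> U m \<omega>" using nested_brackets_mono[OF nested \<open>1 \<le> m\<close> \<open>m \<le> n\<close>] by simp
  moreover have "L n \<omega> \<le> U n \<omega>" using nested_bracketsD[OF nested \<open>1 \<le> n\<close>] by simp
  ultimately have "G0 \<omega> \<le> L m \<omega>" using m below by (auto simp: alg3_halts_def)
  then show ?thesis using m first unfolding alg3_C_eq_1_iff by blast
qed

lemma alg3_C_eq_1_imp_below:
  assumes nested: "nested_brackets L U \<omega>" and "1 \<le> n" and "alg3_C G0 L U \<omega> = 1"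
  shows "G0 \<omega> \<le> U n \<omega>"
proof -
  obtain m where m: "1 \<le> m" "G0 \<omega> \<le> L m \<omega>"
    and before: "\<forall>k. 1 \<le> k \<and> k < m \<longrightarrow> \<not> alg3_halts G0 L U k \<omega>"
    using \<open>alg3_C G0 L U \<omega> = 1\<close> unfolding alg3_C_eq_1_iff by blast
  show ?thesis
  proof (cases "m \<le> n")
    case True
    then show ?thesis
      using m nested_brackets_mono[OF nested \<open>1 \<le> m\<close> True] nested_bracketsD[OF nested \<open>1 \<le> n\<close>]
      by linarith
  next
    case False
    then show ?thesis using before \<open>1 \<le> n\<close> by (auto simp: alg3_halts_def)
  qed
qed

section \<open>The uniform variable G0\<close>

lemma emeasure_uniform_unit_atMost:
  assumes "y \<in> {0..1::real}"
  shows "emeasure (uniform_measure lborel {0<..<1::real}) {..y} = ennreal y"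
proof (cases "y = 1")
  case True
  then have "{0<..<1::real} \<inter> {..y} = {0<..<1}" by auto
  then show ?thesis using True by simp
next
  case False
  then have "{0<..<1::real} \<inter> {..y} = {0<..y}" using assms by auto
  then show ?thesis using assms by (simp add: divide_ennreal_def)
qed

text \<open>If G is uniform on (0, 1) and independent of X \<in> [0, 1], then P(G \<le> X) = E X:
  integrate the distribution function of G against the law of X.\<close>
lemma (in prob_space) prob_uniform_le:
  fixes G X :: "'a \<Rightarrow> real"
  assumes G[measurable]: "G \<in> borel_measurable M"
    and G_unif: "distr M lborel G = uniform_measure lborel {0<..<1::real}"
    and X[measurable]: "X \<in> borel_measurable M" and X_01: "AE \<omega> in M. X \<omega> \<in> {0..1}"
    and indep: "indep_var borel G borel X"
  shows "prob {\<omega>\<in>space M. G \<omega> \<le> X \<omega>} = expectation X"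
proof -
  let ?PG = "distr M borel G" and ?PX = "distr M borel X"
  have law_G: "?PG = uniform_measure lborel {0<..<1::real}"
    by (rule measure_eqI) (simp_all add: emeasure_distr G_unif[symmetric])
  interpret PG: prob_space ?PG by (rule prob_space_distr) simp
  interpret PX: prob_space ?PX by (rule prob_space_distr) simp
  interpret PGX: pair_sigma_finite ?PG ?PX ..
  define S where "S = {p::real \<times> real. fst p \<le> snd p}"
  have S: "S \<in> sets (borel \<Otimes>\<^sub>M borel)"
  proof -
    have "S = {p \<in> space (borel \<Otimes>\<^sub>M borel). fst p \<le> snd p}"
      by (auto simp: S_def space_pair_measure)
    also have "\<dots> \<in> sets (borel \<Otimes>\<^sub>M borel)" by measurable
    finally show ?thesis .
  qed
  have joint: "?PG \<Otimes>\<^sub>M ?PX = distr M (borel \<Otimes>\<^sub>M borel) (\<lambda>\<omega>. (G \<omega>, X \<omega>))"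
    using indep by (simp add: indep_var_distribution_eq)
  have "emeasure M {\<omega>\<in>space M. G \<omega> \<le> X \<omega>} = emeasure (?PG \<Otimes>\<^sub>M ?PX) S"
    unfolding joint using S by (subst emeasure_distr) (auto simp: S_def intro!: arg_cong[where f="emeasure M"])
  also have "\<dots> = (\<integral>\<^sup>+y. emeasure ?PG ((\<lambda>x. (x, y)) -` S) \<partial>?PX)"
    using S by (intro PGX.emeasure_pair_measure_alt2) simp
  also have "\<dots> = (\<integral>\<^sup>+y. ennreal y \<partial>?PX)"
  proof (rule nn_integral_cong_AE)
    have "AE y in ?PX. y \<in> {0..1}" using X_01 by (subst AE_distr_iff) auto
    then show "AE y in ?PX. emeasure ?PG ((\<lambda>x. (x, y)) -` S) = ennreal y"
    proof eventually_elim
      case (elim y)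
      have "(\<lambda>x. (x, y)) -` S = {..y}" by (auto simp: S_def)
      then show ?case using emeasure_uniform_unit_atMost[OF elim] law_G by simp
    qed
  qed
  also have "\<dots> = (\<integral>\<^sup>+\<omega>. ennreal (X \<omega>) \<partial>M)"
    by (subst nn_integral_distr) auto
  also have "\<dots> = ennreal (expectation X)"
  proof (rule nn_integral_eq_integral)
    show "integrable M X"
      by (rule integrable_const_bound[where B=1]) (use X_01 in auto)
  qed (use X_01 in auto)
  finally have "emeasure M {\<omega>\<in>space M. G \<omega> \<le> X \<omega>} = ennreal (expectation X)" .
  moreover have "0 \<le> expectation X" using X_01 by (intro integral_nonneg_AE) auto
  ultimately show ?thesis by (simp add: measure_def)
qed

text \<open>If X is independent of the sigma-algebra generated by Y, then it is independent of every
  measurable function of Y, whose sigma-algebra is coarser.\<close>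
lemma (in prob_space) indep_var_of_vimage_algebras:
  assumes X: "random_variable S X" and Y: "Y \<in> measurable M T"
    and indep: "indep_set (sets (vimage_algebra (space M) X S)) (sets (vimage_algebra (space M) Y T))"
    and h: "h \<in> measurable T N"
  shows "indep_var S X N (\<lambda>\<omega>. h (Y \<omega>))"
proof -
  have "(\<lambda>\<omega>. h (Y \<omega>)) \<in> measurable (vimage_algebra (space M) Y T) N"
    using measurable_space[OF Y] by (intro measurable_compose[OF measurable_vimage_algebra1 h]) auto
  then have coarser: "sets (vimage_algebra (space M) (\<lambda>\<omega>. h (Y \<omega>)) N) \<subseteq> sets (vimage_algebra (space M) Y T)"
    by (intro sets_image_in_sets) simp
  have "indep_set (sets (vimage_algebra (space M) X S)) (sets (vimage_algebra (space M) (\<lambda>\<omega>. h (Y \<omega>)) N))"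
    using indep coarser unfolding indep_sets2_eq by blast
  then show ?thesis
    using X Y h unfolding indep_var_eq sets_vimage_algebra by simp
qed

text \<open>G0 is independent of each single bound L_n, U_n, since these are coordinates of the
  whole bracket sequence.\<close>
lemma (in prob_space) indep_var_bracket_bounds:
  fixes G :: "'a \<Rightarrow> real" and L U :: "nat \<Rightarrow> 'a \<Rightarrow> real"
  assumes G: "G \<in> borel_measurable M"
    and L_meas: "\<And>n. 1 \<le> n \<Longrightarrow> L n \<in> borel_measurable M"
    and U_meas: "\<And>n. 1 \<le> n \<Longrightarrow> U n \<in> borel_measurable M"
    and indep: "indep_set (sets (vimage_algebra (space M) G borel))
        (sets (vimage_algebra (space M) (\<lambda>\<omega>. \<lambda>n\<in>{1..}. (L n \<omega>, U n \<omega>)) (PiM {1..} (\<lambda>_. borel :: (real \<times> real) measure))))"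
    and "1 \<le> n"
  shows "indep_var borel G borel (L n)" "indep_var borel G borel (U n)"
proof -
  define F where "F = (\<lambda>\<omega>. \<lambda>n\<in>{1::nat..}. (L n \<omega>, U n \<omega>))"
  let ?P = "PiM {1::nat..} (\<lambda>_. borel :: (real \<times> real) measure)"
  have F: "F \<in> measurable M ?P"
    unfolding F_def by (rule measurable_restrict) (auto intro!: borel_measurable_Pair L_meas U_meas)
  have coord: "(\<lambda>f. h (f n)) \<in> measurable ?P borel"
    if "h \<in> borel_measurable (borel :: (real \<times> real) measure)" for h
    using measurable_compose[OF measurable_component_singleton[of n] that] \<open>1 \<le> n\<close> by simp
  have "fst \<in> borel_measurable (borel :: (real \<times> real) measure)"
    "snd \<in> borel_measurable (borel :: (real \<times> real) measure)"
    by (intro borel_measurable_continuous_onI continuous_intros)+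
  note indep_coord = indep_var_of_vimage_algebras[OF G F indep[folded F_def] coord[OF this(1)]]
    indep_var_of_vimage_algebras[OF G F indep[folded F_def] coord[OF this(2)]]
  have "(\<lambda>\<omega>. fst (F \<omega> n)) = L n" "(\<lambda>\<omega>. snd (F \<omega> n)) = U n"
    using \<open>1 \<le> n\<close> by (auto simp: F_def)
  then show "indep_var borel G borel (L n)" "indep_var borel G borel (U n)"
    using indep_coord by simp_all
qed

section \<open>The law of the stopping time and of the output\<close>

lemma alg3_halts_pred:
  assumes "G0 \<in> borel_measurable M" "L n \<in> borel_measurable M" "U n \<in> borel_measurable M"
  shows "Measurable.pred M (alg3_halts G0 L U n)"
  using assms unfolding alg3_halts_def by measurable

lemma alg3_N_gt_sets:
  assumes "G0 \<in> borel_measurable M" "\<And>n. 1 \<le> n \<Longrightarrow> L n \<in> borel_measurable M"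
      "\<And>n. 1 \<le> n \<Longrightarrow> U n \<in> borel_measurable M"
  shows "{\<omega>\<in>space M. enat n < alg3_N G0 L U \<omega>} \<in> sets M"
proof -
  have "\<And>k. 1 \<le> k \<Longrightarrow> Measurable.pred M (alg3_halts G0 L U k)"
    using assms by (intro alg3_halts_pred)
  then have "Measurable.pred M (\<lambda>\<omega>. \<forall>k. 1 \<le> k \<and> k \<le> n \<longrightarrow> \<not> alg3_halts G0 L U k \<omega>)"
    by (intro pred_intros_countable pred_intros_imp' pred_intros_logic) auto
  then show ?thesis unfolding alg3_N_gt_iff by measurable
qed

lemma alg3_C_sets:
  assumes G0[measurable]: "G0 \<in> borel_measurable M"
    and L: "\<And>n. 1 \<le> n \<Longrightarrow> L n \<in> borel_measurable M"
    and U: "\<And>n. 1 \<le> n \<Longrightarrow> U n \<in> borel_measurable M"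
  shows "{\<omega>\<in>space M. alg3_C G0 L U \<omega> = 1} \<in> sets M"
proof -
  have "\<And>k. 1 \<le> k \<Longrightarrow> Measurable.pred M (alg3_halts G0 L U k)"
    using assms by (intro alg3_halts_pred)
  then have "Measurable.pred M (\<lambda>\<omega>. \<exists>n. 1 \<le> n \<and> G0 \<omega> \<le> L n \<omega> \<and>
      (\<forall>k. 1 \<le> k \<and> k < n \<longrightarrow> \<not> alg3_halts G0 L U k \<omega>))"
    using L by (intro pred_intros_countable pred_intros_conj1' pred_intros_imp' pred_intros_logic) auto
  then show ?thesis unfolding alg3_C_eq_1_iff by measurable
qed

lemma (in prob_space) prob_alg3_N_gt:
  assumes nested: "AE \<omega> in M. nested_brackets L U \<omega>" and n: "1 \<le> n"
    and G0[measurable]: "G0 \<in> borel_measurable M"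
    and L: "\<And>n. 1 \<le> n \<Longrightarrow> L n \<in> borel_measurable M"
    and U: "\<And>n. 1 \<le> n \<Longrightarrow> U n \<in> borel_measurable M"
    and below_L: "prob {\<omega>\<in>space M. G0 \<omega> \<le> L n \<omega>} = l"
    and below_U: "prob {\<omega>\<in>space M. G0 \<omega> \<le> U n \<omega>} = u"
  shows "prob {\<omega>\<in>space M. enat n < alg3_N G0 L U \<omega>} = u - l"
proof -
  note [measurable] = L[OF n] U[OF n]
  let ?inside = "{\<omega>\<in>space M. L n \<omega> < G0 \<omega> \<and> G0 \<omega> \<le> U n \<omega>}"
  let ?below = "{\<omega>\<in>space M. G0 \<omega> \<le> L n \<omega>}"
  have "prob {\<omega>\<in>space M. enat n < alg3_N G0 L U \<omega>} = prob ?inside"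
  proof (rule measure_eq_AE)
    show "AE \<omega> in M. \<omega> \<in> {\<omega>\<in>space M. enat n < alg3_N G0 L U \<omega>} \<longleftrightarrow> \<omega> \<in> ?inside"
      using nested by eventually_elim (simp add: alg3_N_gt_iff_nested[OF _ n])
  qed (use alg3_N_gt_sets[OF G0 L U] in auto)
  moreover have "prob {\<omega>\<in>space M. G0 \<omega> \<le> U n \<omega>} = prob (?inside \<union> ?below)"
  proof (rule measure_eq_AE)
    show "AE \<omega> in M. \<omega> \<in> {\<omega>\<in>space M. G0 \<omega> \<le> U n \<omega>} \<longleftrightarrow> \<omega> \<in> ?inside \<union> ?below"
      using nested by eventually_elim (use nested_bracketsD(1)[OF _ n] in fastforce)
  qed auto
  moreover have "prob (?inside \<union> ?below) = prob ?inside + prob ?below"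
    by (rule finite_measure_Union) auto
  ultimately show ?thesis using below_L below_U by simp
qed

text \<open>If P(N > n) = d_n with d_n \<longrightarrow> 0, the algorithm halts almost surely, since {N = \<infinity>} is
  the decreasing intersection of the events {N > n}.\<close>
lemma (in prob_space) AE_alg3_N_finite:
  assumes meas: "G0 \<in> borel_measurable M" "\<And>n. 1 \<le> n \<Longrightarrow> L n \<in> borel_measurable M"
      "\<And>n. 1 \<le> n \<Longrightarrow> U n \<in> borel_measurable M"
    and tail: "\<And>n. 1 \<le> n \<Longrightarrow> prob {\<omega>\<in>space M. enat n < alg3_N G0 L U \<omega>} = d n"
    and "d \<longlonglongrightarrow> 0"
  shows "AE \<omega> in M. alg3_N G0 L U \<omega> < \<infinity>"
proof -
  define A where "A n = {\<omega>\<in>space M. enat n < alg3_N G0 L U \<omega>}" for n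
  have "(\<lambda>n. prob (A (Suc n))) \<longlonglongrightarrow> 0"
    using LIMSEQ_Suc[OF \<open>d \<longlonglongrightarrow> 0\<close>] by (simp add: A_def tail)
  then have A_0: "(\<lambda>n. prob (A n)) \<longlonglongrightarrow> 0" by (rule LIMSEQ_imp_Suc)
  have A_sets: "A n \<in> events" for n
    unfolding A_def by (rule alg3_N_gt_sets[OF meas])
  have "decseq A"
    unfolding decseq_def A_def by (auto intro: le_less_trans[of "enat _" "enat _"])
  then have "(\<lambda>n. prob (A n)) \<longlonglongrightarrow> prob (\<Inter>n. A n)"
    using A_sets by (intro finite_Lim_measure_decseq) auto
  then have "prob (\<Inter>n. A n) = 0" using A_0 by (rule LIMSEQ_unique)
  have "x = \<infinity> \<longleftrightarrow> (\<forall>n. enat n < x)" for x :: enat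
    by (cases x) auto
  then have "{\<omega>\<in>space M. \<not> alg3_N G0 L U \<omega> < \<infinity>} = (\<Inter>n. A n)"
    unfolding A_def by auto
  with \<open>prob (\<Inter>n. A n) = 0\<close> show ?thesis
    using A_sets by (subst AE_iff_measurable) (auto simp: emeasure_eq_measure)
qed

text \<open>The output is 1 with probability s: P(G0 \<le> L_n) \<le> P(C = 1) \<le> P(G0 \<le> U_n), and both
  bounds tend to s.\<close>
lemma (in prob_space) prob_alg3_C:
  assumes nested: "AE \<omega> in M. nested_brackets L U \<omega>"
    and G0[measurable]: "G0 \<in> borel_measurable M"
    and L: "\<And>n. 1 \<le> n \<Longrightarrow> L n \<in> borel_measurable M"
    and U: "\<And>n. 1 \<le> n \<Longrightarrow> U n \<in> borel_measurable M"
    and below_L: "\<And>n. 1 \<le> n \<Longrightarrow> prob {\<omega>\<in>space M. G0 \<omega> \<le> L n \<omega>} = l n"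
    and below_U: "\<And>n. 1 \<le> n \<Longrightarrow> prob {\<omega>\<in>space M. G0 \<omega> \<le> U n \<omega>} = u n"
    and "l \<longlonglongrightarrow> s" "u \<longlonglongrightarrow> s"
  shows "prob {\<omega>\<in>space M. alg3_C G0 L U \<omega> = 1} = s"
proof -
  let ?C = "{\<omega>\<in>space M. alg3_C G0 L U \<omega> = 1}"
  have C_sets: "?C \<in> events" by (rule alg3_C_sets[OF G0 L U])
  have "l n \<le> prob ?C" if n: "1 \<le> n" for n
  proof -
    have "AE \<omega> in M. \<omega> \<in> {\<omega>\<in>space M. G0 \<omega> \<le> L n \<omega>} \<longrightarrow> \<omega> \<in> ?C"
      using nested by eventually_elim (use alg3_C_eq_1_if_below[of L U _ n G0] n in auto)
    then have "prob {\<omega>\<in>space M. G0 \<omega> \<le> L n \<omega>} \<le> prob ?C"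
      using C_sets by (rule finite_measure_mono_AE)
    then show ?thesis using below_L[OF n] by simp
  qed
  moreover have "prob ?C \<le> u n" if n: "1 \<le> n" for n
  proof -
    note [measurable] = U[OF n]
    have "AE \<omega> in M. \<omega> \<in> ?C \<longrightarrow> \<omega> \<in> {\<omega>\<in>space M. G0 \<omega> \<le> U n \<omega>}"
      using nested by eventually_elim (use alg3_C_eq_1_imp_below[of L U _ n G0] n in auto)
    then have "prob ?C \<le> prob {\<omega>\<in>space M. G0 \<omega> \<le> U n \<omega>}"
      by (rule finite_measure_mono_AE) measurable
    then show ?thesis using below_U[OF n] by simp
  qed
  ultimately have "s \<le> prob ?C" "prob ?C \<le> s"
    using LIMSEQ_le_const2[OF \<open>l \<longlonglongrightarrow> s\<close>] LIMSEQ_le_const[OF \<open>u \<longlonglongrightarrow> s\<close>] by blast+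
  then show ?thesis by simp
qed

theorem lemma2:
  fixes M :: "'a measure" and s :: real
    and L U :: "nat \<Rightarrow> 'a \<Rightarrow> real" and G0 :: "'a \<Rightarrow> real"
  assumes "prob_space M"
    and s: "0 \<le> s" "s \<le> 1"
    and L_meas: "\<And>n. 1 \<le> n \<Longrightarrow> L n \<in> borel_measurable M"
    and U_meas: "\<And>n. 1 \<le> n \<Longrightarrow> U n \<in> borel_measurable M"
    and AE_bounds: "AE \<omega> in M. \<forall>n\<ge>1. L n \<omega> \<le> U n \<omega> \<and> L n \<omega> \<in> {0..1} \<and> U n \<omega> \<in> {0..1}
                        \<and> (n \<ge> 2 \<longrightarrow> L (n - 1) \<omega> \<le> L n \<omega> \<and> U n \<omega> \<le> U (n - 1) \<omega>)"
    and l_mono: "\<And>n. 1 \<le> n \<Longrightarrow> prob_space.expectation M (L n) \<le> prob_space.expectation M (L (Suc n))"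
    and l_lim: "(\<lambda>n. prob_space.expectation M (L n)) \<longlonglongrightarrow> s"
    and u_mono: "\<And>n. 1 \<le> n \<Longrightarrow> prob_space.expectation M (U (Suc n)) \<le> prob_space.expectation M (U n)"
    and u_lim: "(\<lambda>n. prob_space.expectation M (U n)) \<longlonglongrightarrow> s"
    and G0_meas: "G0 \<in> borel_measurable M"
    and G0_unif: "distr M lborel G0 = uniform_measure lborel {0<..<1::real}"
    and G0_indep: "prob_space.indep_set M
        (sets (vimage_algebra (space M) G0 borel))
        (sets (vimage_algebra (space M) (\<lambda>\<omega>. \<lambda>n\<in>{1..}. (L n \<omega>, U n \<omega>))
                 (PiM {1..} (\<lambda>_. borel :: (real \<times> real) measure))))"
  shows "(AE \<omega> in M. alg3_N G0 L U \<omega> < \<infinity>)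
    \<and> measure M {\<omega> \<in> space M. alg3_C G0 L U \<omega> = 1} = s
    \<and> (\<forall>n\<ge>1. measure M {\<omega> \<in> space M. alg3_N G0 L U \<omega> > enat n}
               = prob_space.expectation M (U n) - prob_space.expectation M (L n))"
proof -
  interpret prob_space M by fact
  let ?l = "\<lambda>n. expectation (L n)" and ?u = "\<lambda>n. expectation (U n)"
  have nested: "AE \<omega> in M. nested_brackets L U \<omega>"
    using AE_bounds unfolding nested_brackets_def .
  have indep: "indep_var borel G0 borel (L n)" "indep_var borel G0 borel (U n)" if "1 \<le> n" for n
    using indep_var_bracket_bounds[OF G0_meas _ _ G0_indep that] L_meas U_meas by blast+
  have bounds_01: "AE \<omega> in M. L n \<omega> \<in> {0..1} \<and> U n \<omega> \<in> {0..1}" if "1 \<le> n" for n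
    using nested by eventually_elim (use nested_bracketsD(2,3)[of L U _ n] that in blast)
  have below_L: "prob {\<omega>\<in>space M. G0 \<omega> \<le> L n \<omega>} = ?l n" if "1 \<le> n" for n
    by (rule prob_uniform_le[OF G0_meas G0_unif L_meas[OF that] _ indep(1)[OF that]])
      (rule eventually_mono[OF bounds_01[OF that]], simp)
  have below_U: "prob {\<omega>\<in>space M. G0 \<omega> \<le> U n \<omega>} = ?u n" if "1 \<le> n" for n
    by (rule prob_uniform_le[OF G0_meas G0_unif U_meas[OF that] _ indep(2)[OF that]])
      (rule eventually_mono[OF bounds_01[OF that]], simp)
  have tail: "prob {\<omega>\<in>space M. enat n < alg3_N G0 L U \<omega>} = ?u n - ?l n" if "1 \<le> n" for n
    using prob_alg3_N_gt[OF nested that G0_meas L_meas U_meas below_L below_U] that by simp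
  have "(\<lambda>n. ?u n - ?l n) \<longlonglongrightarrow> 0"
    using tendsto_diff[OF u_lim l_lim] by simp
  then have "AE \<omega> in M. alg3_N G0 L U \<omega> < \<infinity>"
    using AE_alg3_N_finite[OF G0_meas _ _ tail] L_meas U_meas by blast
  moreover have "prob {\<omega>\<in>space M. alg3_C G0 L U \<omega> = 1} = s"
    by (rule prob_alg3_C[OF nested G0_meas L_meas U_meas below_L below_U l_lim u_lim])
  ultimately show ?thesis using tail by simp
qed

end
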